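(* Let $t\in T_2$, write $xy$ for $t(x,y)$, let $\mathcal{T}_t$ be the variety defined by $t(x,y)=x$, and let $A=X\mathcal{T}_t^{\,p}$ be the free $\mathcal{T}_t^{\,p}$-algebra over a set $X$, written as the semilattice sum $A=\bigsqcup_{s\in S}A_s$ of its semilattice replica classes $A_s$ (each in $\mathcal{T}_t$) over $S=A/\varrho\cong X\mathcal{S}$. Let $\theta$ be a congruence of $A$, and suppose $(a'_r,b'_s)\in\theta$ for some $r,s\in S$, $a'_r\in A_r$, $b'_s\in A_s$. Then for every $a_r\in A_r$ and every $b_s\in A_s$, $(b_s,\,b_sa_r)\in\theta$.
   Context: $\Omega$-algebras are of a plural similarity type (no nullary operation symbols, at least one operation symbol of arity $\ge2$). $T_n$ is the set of $\Omega$-terms in $x_1,\dots,x_n$ in which all $n$ variables occur. An identity is regular if the same variables occur on both sides. $\mathcal{S}$ is the variety of $\Omega$-algebras satisfying all regular identities; the semilattice replica congruence $\varrho$ of $A$ is the smallest congruence with $A/\varrho\in\mathcal{S}$. Prolongation: for an identity $\sigma$ of the form $u(y_1,\dots,y_n)=v(y_1,\dots,y_n)$ and $m\ge1$, $\sigma^p_m$ is the set of identities $u(r_1,\dots,r_n)=v(r_1,\dots,r_n)$ obtained by substituting $r_i(x_1,\dots,x_m)$ for $y_i$, with $r_i$ ranging over $T_m$; $\sigma^p=\bigcup_m\sigma^p_m$; $\Sigma^p=\bigcup_{\sigma\in\Sigma}\sigma^p$. $\mathcal{V}^p$ is the variety defined by $\mathrm{Id}(\mathcal{V})^p$, where $\mathrm{Id}(\mathcal{V})$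 is the set of all identities of $\mathcal{V}$. (It is known that the $\varrho$-classes of $X\mathcal{T}_t^{\,p}$ lie in $\mathcal{T}_t$ and $A/\varrho$ is the free semilattice on $X$.) *)

theory Defs
  imports Main
begin

datatype ('f, 'v) trm = Var 'v | App 'f "('f, 'v) trm list"

fun wf :: "('f \<Rightarrow> nat) \<Rightarrow> ('f, 'v) trm \<Rightarrow> bool" where
  "wf ar (Var v) = True"
| "wf ar (App f ts) = (length ts = ar f \<and> (\<forall>u\<in>set ts. wf ar u))"

fun vars :: "('f, 'v) trm \<Rightarrow> 'v set" where
  "vars (Var v) = {v}"
| "vars (App f ts) = \<Union> (vars ` set ts)"

fun subst :: "('v \<Rightarrow> ('f, 'w) trm) \<Rightarrow> ('f, 'v) trm \<Rightarrow> ('f, 'w) trm" where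
  "subst \<sigma> (Var v) = \<sigma> v"
| "subst \<sigma> (App f ts) = App f (map (subst \<sigma>) ts)"

fun eval :: "('f \<Rightarrow> 'a list \<Rightarrow> 'a) \<Rightarrow> ('v \<Rightarrow> 'a) \<Rightarrow> ('f, 'v) trm \<Rightarrow> 'a" where
  "eval ops \<rho> (Var v) = \<rho> v"
| "eval ops \<rho> (App f ts) = ops f (map (eval ops \<rho>) ts)"

definition plural :: "('f \<Rightarrow> nat) \<Rightarrow> bool" where
  "plural ar \<longleftrightarrow> (\<forall>f. 0 < ar f) \<and> (\<exists>f. 2 \<le> ar f)"

text \<open>Variables are natural numbers; x_i is Var i.  T_m: terms in x_1..x_m in which all occur.\<close>
definition Tm :: "('f \<Rightarrow> nat) \<Rightarrow> nat \<Rightarrow> ('f, nat) trm set" where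
  "Tm ar m = {r. wf ar r \<and> vars r = {1..m}}"

inductive eqc :: "('f \<Rightarrow> nat) \<Rightarrow> (('f, nat) trm \<times> ('f, nat) trm) set
                   \<Rightarrow> ('f, 'v) trm \<Rightarrow> ('f, 'v) trm \<Rightarrow> bool"
  for ar :: "'f \<Rightarrow> nat" and E :: "(('f, nat) trm \<times> ('f, nat) trm) set" where
  ax: "(u, v) \<in> E \<Longrightarrow> (\<forall>i. wf ar (\<sigma> i)) \<Longrightarrow> eqc ar E (subst \<sigma> u) (subst \<sigma> v)"
| refl: "wf ar u \<Longrightarrow> eqc ar E u u"
| sym: "eqc ar E u v \<Longrightarrow> eqc ar E v u"
| trans: "eqc ar E u v \<Longrightarrow> eqc ar E v w \<Longrightarrow> eqc ar E u w"
| cong: "length ts = ar f \<Longrightarrow> length ss = ar f \<Longrightarrow> list_all2 (eqc ar E) ts ss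
          \<Longrightarrow> eqc ar E (App f ts) (App f ss)"

text \<open>Id(V) for the variety V defined by E: all (well-formed) identities derivable from E
  (by Birkhoff's completeness theorem these are exactly the identities holding in V).\<close>
definition Id_of :: "('f \<Rightarrow> nat) \<Rightarrow> (('f, nat) trm \<times> ('f, nat) trm) set
                      \<Rightarrow> (('f, nat) trm \<times> ('f, nat) trm) set" where
  "Id_of ar E = {(u, v). wf ar u \<and> wf ar v \<and> eqc ar E u v}"

definition prolong :: "('f \<Rightarrow> nat) \<Rightarrow> (('f, nat) trm \<times> ('f, nat) trm) set
                        \<Rightarrow> (('f, nat) trm \<times> ('f, nat) trm) set" where
  "prolong ar \<Sigma> = {(subst \<sigma> u, subst \<sigma> v) | u v \<sigma> m.
       (u, v) \<in> \<Sigma> \<and> 1 \<le> m \<and> (\<forall>i. \<sigma> i \<in> Tm ar m)}"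

text \<open>The identity t(x,y) = x defining T_t, with x = x_1, y = x_2.\<close>
definition Tt_ids :: "('f, nat) trm \<Rightarrow> (('f, nat) trm \<times> ('f, nat) trm) set" where
  "Tt_ids t = {(t, Var 1)}"

definition terms_over :: "('f \<Rightarrow> nat) \<Rightarrow> 'x set \<Rightarrow> ('f, 'x) trm set" where
  "terms_over ar X = {u. wf ar u \<and> vars u \<subseteq> X}"

definition free_rel :: "('f \<Rightarrow> nat) \<Rightarrow> (('f, nat) trm \<times> ('f, nat) trm) set \<Rightarrow> 'x set
                         \<Rightarrow> ('f, 'x) trm rel" where
  "free_rel ar \<Sigma> X = {(u, v). u \<in> terms_over ar X \<and> v \<in> terms_over ar X \<and> eqc ar \<Sigma> u v}"

definition free_carrier :: "('f \<Rightarrow> nat) \<Rightarrow> (('f, nat) trm \<times> ('f, nat) trm) set \<Rightarrow> 'x set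
                             \<Rightarrow> ('f, 'x) trm set set" where
  "free_carrier ar \<Sigma> X = terms_over ar X // free_rel ar \<Sigma> X"

definition free_op :: "('f \<Rightarrow> nat) \<Rightarrow> (('f, nat) trm \<times> ('f, nat) trm) set \<Rightarrow> 'x set
                        \<Rightarrow> 'f \<Rightarrow> ('f, 'x) trm set list \<Rightarrow> ('f, 'x) trm set" where
  "free_op ar \<Sigma> X f cs = free_rel ar \<Sigma> X `` {App f (map (\<lambda>c. SOME u. u \<in> c) cs)}"

definition is_cong :: "('f \<Rightarrow> nat) \<Rightarrow> 'a set \<Rightarrow> ('f \<Rightarrow> 'a list \<Rightarrow> 'a) \<Rightarrow> 'a rel \<Rightarrow> bool" where
  "is_cong ar C ops \<theta> \<longleftrightarrow> equiv C \<theta> \<and>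
     (\<forall>f xs ys. length xs = ar f \<and> length ys = ar f \<and> set xs \<subseteq> C \<and> set ys \<subseteq> C \<and>
        list_all2 (\<lambda>x y. (x, y) \<in> \<theta>) xs ys \<longrightarrow> (ops f xs, ops f ys) \<in> \<theta>)"

text \<open>A congruence alpha such that the quotient satisfies every regular identity
  (i.e. the quotient lies in the variety S).\<close>
definition S_cong :: "('f \<Rightarrow> nat) \<Rightarrow> 'a set \<Rightarrow> ('f \<Rightarrow> 'a list \<Rightarrow> 'a) \<Rightarrow> 'a rel \<Rightarrow> bool" where
  "S_cong ar C ops \<alpha> \<longleftrightarrow> is_cong ar C ops \<alpha> \<and>
     (\<forall>(u :: ('f, nat) trm) v. wf ar u \<and> wf ar v \<and> vars u = vars v \<longrightarrow>
        (\<forall>\<rho>. (\<forall>i. \<rho> i \<in> C) \<longrightarrow> (eval ops \<rho> u, eval ops \<rho> v) \<in> \<alpha>))"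

definition replica :: "('f \<Rightarrow> nat) \<Rightarrow> 'a set \<Rightarrow> ('f \<Rightarrow> 'a list \<Rightarrow> 'a) \<Rightarrow> 'a rel" where
  "replica ar C ops = {(a, b). a \<in> C \<and> b \<in> C \<and> (\<forall>\<alpha>. S_cong ar C ops \<alpha> \<longrightarrow> (a, b) \<in> \<alpha>)}"

definition binop :: "('f, nat) trm \<Rightarrow> ('f \<Rightarrow> 'a list \<Rightarrow> 'a) \<Rightarrow> 'a \<Rightarrow> 'a \<Rightarrow> 'a" where
  "binop t ops x y = eval ops (\<lambda>i. if i = 1 then x else y) t"

end

(*
  Derivations from a prolonged set of identities never change the set of variables of a term,
  so the variables of a term are an invariant of its class in the free algebra A; the replica
  classes A_s lie in the fibres of this invariant, and x y := t(x, y) satisfies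
  vars(x y) = vars x \<union> vars y.  Instantiating the prolonged identity t(x, y) = x with two terms
  in the same variables shows that x y = x whenever x and y lie in the same fibre.
  Hence, if a' \<in> A_r and b' \<in> A_s are \<theta>-related, then for a \<in> A_r, b \<in> A_s:
    b a  \<theta>  b (a b')  \<theta>  (b a') (a b')  =  b a'  \<theta>  b,
  using a = a a' \<theta> a b', b = b b' \<theta> b a', and that b a' and a b' lie in the same fibre.
*)
theory Submission
  imports Defs
begin

lemma subst_subst: "subst \<tau> (subst \<sigma> u) = subst (\<lambda>i. subst \<tau> (\<sigma> i)) u"
  by (induction u) auto

lemma subst_Var_id: "subst Var u = u"
  by (induction u) (auto simp: map_idI)

lemma subst_cong_vars: "(\<And>x. x \<in> vars u \<Longrightarrow> \<sigma> x = \<sigma>' x) \<Longrightarrow> subst \<sigma> u = subst \<sigma>' u"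
  by (induction u) auto

lemma vars_subst: "vars (subst \<sigma> u) = (\<Union>x\<in>vars u. vars (\<sigma> x))"
  by (induction u) auto

lemma wf_subst: "wf ar u \<Longrightarrow> (\<And>x. wf ar (\<sigma> x)) \<Longrightarrow> wf ar (subst \<sigma> u)"
  by (induction u) auto

lemma finite_vars: "finite (vars u)"
  by (induction u) auto

lemma vars_nonempty: "plural ar \<Longrightarrow> wf ar u \<Longrightarrow> vars u \<noteq> {}"
proof (induction u)
  case (App f ts)
  then have "ts \<noteq> []" unfolding plural_def by (metis list.size(3) wf.simps(2) less_irrefl)
  with App show ?case by (cases ts) auto
qed simp

section \<open>Prolonged identities\<close>

lemma eqc_vars_eq_if_regular:
  assumes "eqc ar E u v" and "\<And>p q. (p, q) \<in> E \<Longrightarrow> vars p = vars q"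
  shows "vars u = vars v"
  using assms(1)
proof (induction rule: eqc.induct)
  case (cong ts f ss)
  then have "map vars ts = map vars ss"
    by (simp add: list.rel_map flip: list.rel_eq) (auto elim: list_all2_mono)
  then show ?case by (metis vars.simps(2) list.set_map)
qed (auto simp: vars_subst assms(2))

lemma vars_prolong_eq:
  assumes "plural ar" and "\<And>p q. (p, q) \<in> \<Sigma> \<Longrightarrow> wf ar p \<and> wf ar q"
    and "(u, v) \<in> prolong ar \<Sigma>"
  shows "vars u = vars v"
proof -
  obtain p q \<sigma> m where uv: "u = subst \<sigma> p" "v = subst \<sigma> q" "(p, q) \<in> \<Sigma>"
    and \<sigma>: "\<And>i. \<sigma> i \<in> Tm ar m"
    using assms(3) unfolding prolong_def by blast
  have "vars p \<noteq> {}" "vars q \<noteq> {}"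
    using uv(3) assms(1,2) vars_nonempty by blast+
  with \<sigma> show ?thesis
    unfolding uv by (auto simp: vars_subst Tm_def)
qed

text \<open>A prolongation only substitutes terms in exactly the variables 1, ..., m.  To substitute
  terms sharing an arbitrary finite variable set V, rename V bijectively onto {1..card V},
  apply the prolonged identity, and rename back.\<close>

lemma eqc_prolong_instance:
  fixes \<tau> :: "nat \<Rightarrow> ('f, 'x) trm"
  assumes pq: "(p, q) \<in> \<Sigma>" and wf_\<tau>: "\<And>i. wf ar (\<tau> i)"
    and vars_\<tau>: "\<And>i. vars (\<tau> i) = V" and "V \<noteq> {}"
  shows "eqc ar (prolong ar \<Sigma>) (subst \<tau> p) (subst \<tau> q)"
proof -
  have "finite V" using vars_\<tau>[of 0] finite_vars by metis
  then obtain h where h: "bij_betw h {1..card V} V"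
    using ex_bij_betw_nat_finite_1 by blast
  define g where "g = inv_into {1..card V} h"
  have g: "bij_betw g V {1..card V}"
    unfolding g_def using h by (rule bij_betw_inv_into)
  have h_g_cancel: "subst (Var \<circ> h) (subst (Var \<circ> g) z) = z" if "vars z = V" for z :: "('f, 'x) trm"
  proof -
    have "subst (Var \<circ> h) (subst (Var \<circ> g) z) = subst Var z"
      unfolding subst_subst using that h
      by (intro subst_cong_vars) (simp add: g_def bij_betw_inv_into_right)
    then show ?thesis by (simp add: subst_Var_id)
  qed
  define \<sigma> where "\<sigma> i = subst (Var \<circ> g) (\<tau> i)" for i
  have "\<sigma> i \<in> Tm ar (card V)" for i
    using wf_\<tau> vars_\<tau> g
    by (auto simp: \<sigma>_def Tm_def vars_subst bij_betw_def intro!: wf_subst)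
  moreover have "1 \<le> card V"
    using \<open>finite V\<close> \<open>V \<noteq> {}\<close> by (simp add: Suc_le_eq card_gt_0_iff)
  ultimately have "(subst \<sigma> p, subst \<sigma> q) \<in> prolong ar \<Sigma>"
    using pq unfolding prolong_def by blast
  then have "eqc ar (prolong ar \<Sigma>) (subst (Var \<circ> h) (subst \<sigma> p)) (subst (Var \<circ> h) (subst \<sigma> q))"
    by (rule eqc.ax) simp
  moreover have "(\<lambda>i. subst (Var \<circ> h) (\<sigma> i)) = \<tau>"
    using h_g_cancel vars_\<tau> by (simp add: \<sigma>_def)
  ultimately show ?thesis by (simp add: subst_subst)
qed

lemma eqc_prolong_Tt_left:
  assumes "plural ar" and "wf ar t" and "wf ar u" and "wf ar w" and "vars u = vars w"
  shows "eqc ar (prolong ar (Id_of ar (Tt_ids t))) (subst (\<lambda>i. if i = 1 then u else w) t) u"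
proof -
  have "eqc ar (Tt_ids t) (subst Var t) (subst Var (Var 1))"
    by (rule eqc.ax) (simp_all add: Tt_ids_def)
  then have "(t, Var 1) \<in> Id_of ar (Tt_ids t)"
    using assms(2) by (simp add: Id_of_def subst_Var_id)
  then have "eqc ar (prolong ar (Id_of ar (Tt_ids t)))
      (subst (\<lambda>i. if i = 1 then u else w) t) (subst (\<lambda>i. if i = 1 then u else w) (Var (1 :: nat)))"
    by (rule eqc_prolong_instance[where V = "vars u"]) (use assms vars_nonempty in auto)
  then show ?thesis by simp
qed

lemma eval_closed:
  assumes "\<And>f xs. length xs = ar f \<Longrightarrow> set xs \<subseteq> C \<Longrightarrow> ops f xs \<in> C"
  shows "wf ar p \<Longrightarrow> (\<And>i. e i \<in> C) \<Longrightarrow> eval ops e p \<in> C"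
  by (induction p) (auto intro!: assms)

lemma is_cong_eval:
  assumes closed: "\<And>f xs. length xs = ar f \<Longrightarrow> set xs \<subseteq> C \<Longrightarrow> ops f xs \<in> C"
    and "is_cong ar C ops \<theta>"
  shows "wf ar p \<Longrightarrow> (\<And>i. (e i, e' i) \<in> \<theta>) \<Longrightarrow> (eval ops e p, eval ops e' p) \<in> \<theta>"
proof (induction p)
  case (App f ts)
  have "\<theta> \<subseteq> C \<times> C"
    using assms(2) by (auto simp: is_cong_def equiv_def refl_on_def)
  then have "e i \<in> C" "e' i \<in> C" for i
    using App.prems(2) by blast+
  then have "set (map (eval ops e) ts) \<subseteq> C" "set (map (eval ops e') ts) \<subseteq> C"
    using App.prems(1) by (auto intro!: eval_closed[OF closed])
  moreover have "list_all2 (\<lambda>x y. (x, y) \<in> \<theta>) (map (eval ops e) ts) (map (eval ops e') ts)"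
    using App by (auto simp: list.rel_map list_all2_same)
  ultimately show ?case
    using assms(2) App.prems(1) unfolding is_cong_def by simp
qed simp

lemma cong_semilattice_of_left_zero_bands:
  fixes m :: "'a \<Rightarrow> 'a \<Rightarrow> 'a" and \<kappa> :: "'a \<Rightarrow> 'b :: semilattice_sup"
  assumes "equiv C \<theta>"
    and m_closed: "\<And>x y. x \<in> C \<Longrightarrow> y \<in> C \<Longrightarrow> m x y \<in> C"
    and m_cong: "\<And>x x' y y'. (x, x') \<in> \<theta> \<Longrightarrow> (y, y') \<in> \<theta> \<Longrightarrow> (m x y, m x' y') \<in> \<theta>"
    and left_zero: "\<And>x y. x \<in> C \<Longrightarrow> y \<in> C \<Longrightarrow> \<kappa> x = \<kappa> y \<Longrightarrow> m x y = x"
    and \<kappa>_m: "\<And>x y. x \<in> C \<Longrightarrow> y \<in> C \<Longrightarrow> \<kappa> (m x y) = sup (\<kappa> x) (\<kappa> y)"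
    and C: "a \<in> C" "a' \<in> C" "b \<in> C" "b' \<in> C"
    and "\<kappa> a = \<kappa> a'" and "\<kappa> b = \<kappa> b'" and "(a', b') \<in> \<theta>"
  shows "(b, m b a) \<in> \<theta>"
proof -
  have refl: "(x, x) \<in> \<theta>" if "x \<in> C" for x
    using assms(1) that unfolding equiv_def refl_on_def by blast
  have sym: "(x, y) \<in> \<theta> \<Longrightarrow> (y, x) \<in> \<theta>" for x y
    using assms(1) by (simp add: equiv_def symD)
  have trans: "(x, y) \<in> \<theta> \<Longrightarrow> (y, z) \<in> \<theta> \<Longrightarrow> (x, z) \<in> \<theta>" for x y z
    using assms(1) by (meson equiv_def transD)
  have a_ab': "(a, m a b') \<in> \<theta>"
    using m_cong[OF refl[OF C(1)] \<open>(a', b') \<in> \<theta>\<close>] left_zero[OF C(1,2)] \<open>\<kappa> a = \<kappa> a'\<close> by simp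
  have b_ba': "(b, m b a') \<in> \<theta>"
    using m_cong[OF refl[OF C(3)] sym[OF \<open>(a', b') \<in> \<theta>\<close>]] left_zero[OF C(3,4)] \<open>\<kappa> b = \<kappa> b'\<close>
    by simp
  have "(m b a, m b (m a b')) \<in> \<theta>"
    using m_cong[OF refl[OF C(3)] a_ab'] .
  moreover have "(m b (m a b'), m (m b a') (m a b')) \<in> \<theta>"
    using m_cong[OF b_ba' refl[OF m_closed[OF C(1,4)]]] .
  moreover have "m (m b a') (m a b') = m b a'"
    using C \<open>\<kappa> a = \<kappa> a'\<close> \<open>\<kappa> b = \<kappa> b'\<close>
    by (intro left_zero m_closed) (simp_all add: \<kappa>_m sup_commute)
  ultimately have "(m b a, m b a') \<in> \<theta>"
    using trans by metis
  then show ?thesis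
    using b_ba' sym trans by metis
qed

section \<open>Free algebras of regular theories\<close>

text \<open>On the free algebra of a regular theory, class_vars is the projection onto the semilattice
  replica XS.\<close>

definition class_vars :: "('f, 'x) trm set \<Rightarrow> 'x set" where
  "class_vars c = \<Union> (vars ` c)"

locale regular_free_algebra =
  fixes ar :: "'f \<Rightarrow> nat" and \<Sigma> :: "(('f, nat) trm \<times> ('f, nat) trm) set" and X :: "'x set"
  assumes free_rel_vars_eq: "(u, v) \<in> free_rel ar \<Sigma> X \<Longrightarrow> vars u = vars v"
begin

abbreviation A where "A \<equiv> free_carrier ar \<Sigma> X"
abbreviation ops where "ops \<equiv> free_op ar \<Sigma> X"
abbreviation cls where "cls u \<equiv> free_rel ar \<Sigma> X `` {u}"

lemma equiv_free_rel: "equiv (terms_over ar X) (free_rel ar \<Sigma> X)"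
proof (rule equivI)
  show "refl_on (terms_over ar X) (free_rel ar \<Sigma> X)"
    unfolding refl_on_def free_rel_def terms_over_def by (auto intro: eqc.refl)
  show "sym (free_rel ar \<Sigma> X)"
    unfolding sym_def free_rel_def by (auto intro: eqc.sym)
  show "trans (free_rel ar \<Sigma> X)"
    unfolding trans_def free_rel_def by (blast intro: eqc.trans)
  show "free_rel ar \<Sigma> X \<subseteq> terms_over ar X \<times> terms_over ar X"
    unfolding free_rel_def by auto
qed

lemma cls_in_A: "u \<in> terms_over ar X \<Longrightarrow> cls u \<in> A"
  unfolding free_carrier_def by (rule quotientI)

lemma cls_eq: "u \<in> terms_over ar X \<Longrightarrow> v \<in> terms_over ar X \<Longrightarrow> eqc ar \<Sigma> u v \<Longrightarrow> cls u = cls v"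
  by (rule equiv_class_eq[OF equiv_free_rel]) (simp add: free_rel_def)

lemma A_eq_cls:
  assumes "c \<in> A" and "u \<in> c"
  shows "u \<in> terms_over ar X" and "c = cls u"
proof -
  have c: "c \<in> terms_over ar X // free_rel ar \<Sigma> X"
    using assms(1) by (simp add: free_carrier_def)
  show "u \<in> terms_over ar X"
    using in_quotient_imp_subset[OF equiv_free_rel c] assms(2) by blast
  show "c = cls u"
    using in_quotient_imp_in_rel[OF equiv_free_rel c] in_quotient_imp_closed[OF equiv_free_rel c]
      assms(2) by blast
qed

lemma some_in_A: "c \<in> A \<Longrightarrow> (SOME u. u \<in> c) \<in> c"
  using in_quotient_imp_non_empty[OF equiv_free_rel] by (simp add: free_carrier_def some_in_eq)

lemma mem_cls: "v \<in> cls u \<Longrightarrow> v \<in> terms_over ar X \<and> eqc ar \<Sigma> u v"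
  by (simp add: free_rel_def)

lemma class_vars_cls:
  assumes "u \<in> terms_over ar X"
  shows "class_vars (cls u) = vars u"
proof -
  have "vars u = vars v" if "v \<in> cls u" for v
    using that free_rel_vars_eq by blast
  moreover have "u \<in> cls u"
    using equiv_class_self[OF equiv_free_rel assms] .
  ultimately show ?thesis
    unfolding class_vars_def by blast
qed

lemma class_vars_eq_vars: "c \<in> A \<Longrightarrow> u \<in> c \<Longrightarrow> class_vars c = vars u"
  using A_eq_cls class_vars_cls by metis

lemma App_in_terms_over: "length us = ar f \<Longrightarrow> set us \<subseteq> terms_over ar X \<Longrightarrow> App f us \<in> terms_over ar X"
  unfolding terms_over_def by auto

lemma
  assumes "length cs = ar f" and "set cs \<subseteq> A"
  shows free_op_in_A: "ops f cs \<in> A"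
    and class_vars_free_op: "class_vars (ops f cs) = \<Union> (class_vars ` set cs)"
proof -
  define rep where "rep c = (SOME u. u \<in> c)" for c :: "('f, 'x) trm set"
  have rep: "rep c \<in> c" "rep c \<in> terms_over ar X" "class_vars c = vars (rep c)" if "c \<in> set cs" for c
    using that assms(2) some_in_A A_eq_cls(1) class_vars_eq_vars unfolding rep_def by blast+
  then have App: "App f (map rep cs) \<in> terms_over ar X"
    using assms(1) by (intro App_in_terms_over) auto
  have ops: "ops f cs = cls (App f (map rep cs))"
    unfolding free_op_def rep_def ..
  show "ops f cs \<in> A"
    unfolding ops using App by (rule cls_in_A)
  show "class_vars (ops f cs) = \<Union> (class_vars ` set cs)"
    unfolding ops class_vars_cls[OF App] using rep(3) by simp
qed

lemma free_op_cls:
  assumes "length us = ar f" and "set us \<subseteq> terms_over ar X"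
  shows "ops f (map (\<lambda>u. cls u) us) = cls (App f us)"
proof -
  define rep where "rep c = (SOME u. u \<in> c)" for c :: "('f, 'x) trm set"
  have "rep (cls u) \<in> cls u" if "u \<in> set us" for u
    using that assms(2) some_in_A cls_in_A unfolding rep_def by blast
  then have "eqc ar \<Sigma> (rep (cls u)) u" and "rep (cls u) \<in> terms_over ar X" if "u \<in> set us" for u
    using that mem_cls eqc.sym by blast+
  then have "cls (App f (map (rep \<circ> cls) us)) = cls (App f us)"
    using assms by (intro cls_eq App_in_terms_over eqc.cong) (auto simp: list.rel_map list_all2_same)
  then show ?thesis
    unfolding free_op_def rep_def by (simp add: comp_def)
qed

lemma subst_in_terms_over:
  "wf ar p \<Longrightarrow> (\<And>i. \<sigma> i \<in> terms_over ar X) \<Longrightarrow> subst \<sigma> p \<in> terms_over ar X"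
  unfolding terms_over_def by (force simp: vars_subst intro: wf_subst)

lemma eval_in_A: "wf ar p \<Longrightarrow> (\<And>i. e i \<in> A) \<Longrightarrow> eval ops e p \<in> A"
  by (rule eval_closed[where C = A]) (auto intro: free_op_in_A)

lemma eval_cls:
  "wf ar p \<Longrightarrow> (\<And>i. \<sigma> i \<in> terms_over ar X) \<Longrightarrow> eval ops (\<lambda>i. cls (\<sigma> i)) p = cls (subst \<sigma> p)"
proof (induction p)
  case (App f ts)
  have "set (map (subst \<sigma>) ts) \<subseteq> terms_over ar X"
    using App.prems by (auto intro: subst_in_terms_over)
  then show ?case
    using App free_op_cls[of "map (subst \<sigma>) ts" f] by (simp cong: map_cong)
qed simp

lemma class_vars_eval:
  "wf ar p \<Longrightarrow> (\<And>i. e i \<in> A) \<Longrightarrow> class_vars (eval ops e p) = (\<Union>i\<in>vars p. class_vars (e i))"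
proof (induction p)
  case (App f ts)
  have "set (map (eval ops e) ts) \<subseteq> A"
    using App.prems by (auto intro: eval_in_A)
  with App show ?case
    using class_vars_free_op[of "map (eval ops e) ts" f] by auto
qed simp

lemma S_cong_class_vars_kernel:
  "S_cong ar A ops {(c, d). c \<in> A \<and> d \<in> A \<and> class_vars c = class_vars d}"
  unfolding S_cong_def is_cong_def
proof (intro conjI allI impI)
  show "equiv A {(c, d). c \<in> A \<and> d \<in> A \<and> class_vars c = class_vars d}"
    by (rule equivI) (auto simp: refl_on_def sym_def trans_def)
next
  fix f xs ys
  assume "length xs = ar f \<and> length ys = ar f \<and> set xs \<subseteq> A \<and> set ys \<subseteq> A \<and>
    list_all2 (\<lambda>x y. (x, y) \<in> {(c, d). c \<in> A \<and> d \<in> A \<and> class_vars c = class_vars d}) xs ys"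
  moreover from this have "map class_vars xs = map class_vars ys"
    by (auto simp: list.rel_map elim: list_all2_mono simp flip: list.rel_eq)
  then have "class_vars ` set xs = class_vars ` set ys"
    by (metis list.set_map)
  ultimately show "(ops f xs, ops f ys) \<in> {(c, d). c \<in> A \<and> d \<in> A \<and> class_vars c = class_vars d}"
    using free_op_in_A class_vars_free_op by simp
next
  fix u v :: "('f, nat) trm" and e :: "nat \<Rightarrow> _"
  assume "wf ar u \<and> wf ar v \<and> vars u = vars v" and "\<forall>i. e i \<in> A"
  then show "(eval ops e u, eval ops e v) \<in> {(c, d). c \<in> A \<and> d \<in> A \<and> class_vars c = class_vars d}"
    by (simp add: class_vars_eval eval_in_A)
qed

lemma class_vars_eq_if_replica: "(c, d) \<in> replica ar A ops \<Longrightarrow> class_vars c = class_vars d"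
  using S_cong_class_vars_kernel unfolding replica_def by blast

lemma class_vars_eq_in_replica_class:
  assumes "q \<in> A // replica ar A ops" and "c \<in> q" and "d \<in> q"
  shows "c \<in> A" and "class_vars c = class_vars d"
proof -
  obtain e where "q = replica ar A ops `` {e}"
    using assms(1) by (rule quotientE)
  then have ec: "(e, c) \<in> replica ar A ops" and ed: "(e, d) \<in> replica ar A ops"
    using assms(2,3) by auto
  then show "c \<in> A"
    by (simp add: replica_def)
  show "class_vars c = class_vars d"
    using class_vars_eq_if_replica[OF ec] class_vars_eq_if_replica[OF ed] by simp
qed

lemma binop_cls:
  assumes "wf ar t" and "u \<in> terms_over ar X" and "w \<in> terms_over ar X"
  shows "binop t ops (cls u) (cls w) = cls (subst (\<lambda>i. if i = 1 then u else w) t)"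
proof -
  have "(\<lambda>i :: nat. if i = 1 then cls u else cls w) = (\<lambda>i. cls (if i = 1 then u else w))"
    by (rule ext) simp
  then show ?thesis
    unfolding binop_def using eval_cls[OF assms(1)] assms(2,3) by simp
qed

lemma binop_in_A: "wf ar t \<Longrightarrow> x \<in> A \<Longrightarrow> y \<in> A \<Longrightarrow> binop t ops x y \<in> A"
  unfolding binop_def by (rule eval_in_A) auto

lemma is_cong_binop:
  assumes "is_cong ar A ops \<theta>" and "wf ar t" and "(x, x') \<in> \<theta>" and "(y, y') \<in> \<theta>"
  shows "(binop t ops x y, binop t ops x' y') \<in> \<theta>"
  unfolding binop_def
  by (rule is_cong_eval[where C = A, OF free_op_in_A assms(1,2)]) (use assms(3,4) in auto)

lemma class_vars_binop:
  assumes "wf ar t" and "vars t = {1, 2}" and "x \<in> A" and "y \<in> A"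
  shows "class_vars (binop t ops x y) = class_vars x \<union> class_vars y"
  unfolding binop_def using assms by (simp add: class_vars_eval)

lemma binop_left_zero:
  fixes t :: "('f, nat) trm"
  assumes Tt: "\<And>u w :: ('f, 'x) trm. wf ar u \<Longrightarrow> wf ar w \<Longrightarrow> vars u = vars w \<Longrightarrow>
      eqc ar \<Sigma> (subst (\<lambda>i. if i = 1 then u else w) t) u"
    and "wf ar t" and "vars t = {1, 2}" and "x \<in> A" and "y \<in> A" and "class_vars x = class_vars y"
  shows "binop t ops x y = x"
proof -
  obtain u w where u: "u \<in> terms_over ar X" "x = cls u" and w: "w \<in> terms_over ar X" "y = cls w"
    using assms(4,5) some_in_A A_eq_cls by metis
  then have "vars u = vars w"
    using assms(6) class_vars_cls by simp
  then have "eqc ar \<Sigma> (subst (\<lambda>i. if i = 1 then u else w) t) u"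
    using u(1) w(1) by (intro Tt) (auto simp: terms_over_def)
  then show ?thesis
    using u w assms(2,3) by (simp add: binop_cls cls_eq subst_in_terms_over)
qed

lemma cong_absorbs_linked_replica_classes:
  fixes t :: "('f, nat) trm"
  assumes Tt: "\<And>u w :: ('f, 'x) trm. wf ar u \<Longrightarrow> wf ar w \<Longrightarrow> vars u = vars w \<Longrightarrow>
      eqc ar \<Sigma> (subst (\<lambda>i. if i = 1 then u else w) t) u"
    and t: "wf ar t" "vars t = {1, 2}"
    and "is_cong ar A ops \<theta>"
    and "r \<in> A // replica ar A ops" and "s \<in> A // replica ar A ops"
    and "a \<in> r" "a' \<in> r" and "b \<in> s" "b' \<in> s" and "(a', b') \<in> \<theta>"
  shows "(b, binop t ops b a) \<in> \<theta>"
proof -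
  have "equiv A \<theta>"
    using \<open>is_cong ar A ops \<theta>\<close> by (simp add: is_cong_def)
  moreover have "binop t ops x y \<in> A" if "x \<in> A" "y \<in> A" for x y
    using binop_in_A t that by blast
  moreover have "(binop t ops x y, binop t ops x' y') \<in> \<theta>"
    if "(x, x') \<in> \<theta>" "(y, y') \<in> \<theta>" for x x' y y'
    using is_cong_binop \<open>is_cong ar A ops \<theta>\<close> t that by blast
  moreover have "binop t ops x y = x" if "x \<in> A" "y \<in> A" "class_vars x = class_vars y" for x y
    using binop_left_zero[OF Tt t that] .
  moreover have "class_vars (binop t ops x y) = sup (class_vars x) (class_vars y)"
    if "x \<in> A" "y \<in> A" for x y
    using class_vars_binop t that by simp
  moreover have "a \<in> A" "a' \<in> A" "b \<in> A" "b' \<in> A"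
    and "class_vars a = class_vars a'" "class_vars b = class_vars b'"
    using class_vars_eq_in_replica_class assms(5-10) by blast+
  ultimately show ?thesis
    using \<open>(a', b') \<in> \<theta>\<close> by (rule cong_semilattice_of_left_zero_bands)
qed

end

lemma regular_free_algebra_prolong:
  assumes "plural ar"
  shows "regular_free_algebra ar (prolong ar (Id_of ar E)) X"
proof
  fix u v
  assume "(u, v) \<in> free_rel ar (prolong ar (Id_of ar E)) X"
  then have "eqc ar (prolong ar (Id_of ar E)) u v"
    by (simp add: free_rel_def)
  moreover have "vars p = vars q" if "(p, q) \<in> prolong ar (Id_of ar E)" for p q
    using vars_prolong_eq[OF assms _ that] by (simp add: Id_of_def)
  ultimately show "vars u = vars v"
    by (rule eqc_vars_eq_if_regular)
qed

theorem lemma4p1: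
  fixes ar :: "'f \<Rightarrow> nat" and t :: "('f, nat) trm" and X :: "'x set"
    and \<theta> :: "('f, 'x) trm set rel"
  defines "\<Sigma> \<equiv> prolong ar (Id_of ar (Tt_ids t))"
  defines "A \<equiv> free_carrier ar \<Sigma> X"
  defines "ops \<equiv> free_op ar \<Sigma> X"
  defines "\<rho> \<equiv> replica ar A ops"
  assumes "plural ar"
    and "t \<in> Tm ar 2"
    and "is_cong ar A ops \<theta>"
    and "r \<in> A // \<rho>" and "s \<in> A // \<rho>"
    and "a' \<in> r" and "b' \<in> s" and "(a', b') \<in> \<theta>"
  shows "\<forall>a \<in> r. \<forall>b \<in> s. (b, binop t ops b a) \<in> \<theta>"
proof (intro ballI)
  fix a b
  assume "a \<in> r" and "b \<in> s"
  interpret F: regular_free_algebra ar \<Sigma> X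
    unfolding \<Sigma>_def using \<open>plural ar\<close> by (rule regular_free_algebra_prolong)
  have "{1..2} = {1, 2 :: nat}"
    by auto
  then have t: "wf ar t" "vars t = {1, 2}"
    using \<open>t \<in> Tm ar 2\<close> by (simp_all add: Tm_def)
  show "(b, binop t ops b a) \<in> \<theta>"
    using F.cong_absorbs_linked_replica_classes[OF eqc_prolong_Tt_left[OF \<open>plural ar\<close> t(1), folded \<Sigma>_def] t]
      assms(7-12) \<open>a \<in> r\<close> \<open>b \<in> s\<close>
    unfolding A_def ops_def \<rho>_def by blast
qed

end
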